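(* Let $p$ be a prime, $q$ a power of $p$, and $F$ a field of characteristic $p$ containing $\mathbb{F}_q$. Let $L=a_0x+a_1x^q+\cdots+a_{n-1}x^{q^{n-1}}+x^{q^n}\in F[x]$ be a monic $q$-polynomial of $q$-degree $n\ge 1$ with $a_0\neq 0$. Let $E$ be a splitting field of $L$ over $F$, let $\alpha_1,\dots,\alpha_n$ be an $\mathbb{F}_q$-basis of the $\mathbb{F}_q$-vector space $V\subseteq E$ of roots of $L$, and let $\delta=\det D$, where $D$ is the $n\times n$ matrix whose $(i,j)$ entry is $\alpha_i^{q^{j-1}}$ ($1\le i,j\le n$). Then $\delta\neq 0$, and: (1) $\delta^{q-1}\in F$; (2) $F(\delta)$ is a normal extension of $F$.
   Context: A $q$-polynomial over $F$ is a polynomial of the form $\sum_{i=0}^n a_i x^{q^i}\in F[x]$; if $a_n\neq0$ its $q$-degree is $n$. When $a_0\neq 0$, the roots of $L$ in $E$ are distinct and form an $n$-dimensional $\mathbb{F}_q$-vector space $V$. *)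

theory Defs
  imports "HOL-Computational_Algebra.Polynomial" "Jordan_Normal_Form.Determinant"
begin

definition is_subfield :: "'a::field set \<Rightarrow> bool" where
  "is_subfield K \<longleftrightarrow> 0 \<in> K \<and> 1 \<in> K \<and>
     (\<forall>x\<in>K. \<forall>y\<in>K. x + y \<in> K \<and> x - y \<in> K \<and> x * y \<in> K) \<and>
     (\<forall>x\<in>K. x \<noteq> 0 \<longrightarrow> inverse x \<in> K)"

definition gen_subfield :: "'a::field set \<Rightarrow> 'a set \<Rightarrow> 'a set" where
  "gen_subfield F S = \<Inter> {K. is_subfield K \<and> F \<union> S \<subseteq> K}"

definition poly_over :: "'a::field set \<Rightarrow> 'a poly \<Rightarrow> bool" where
  "poly_over F P \<longleftrightarrow> (\<forall>i. coeff P i \<in> F)"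

definition splits_in :: "'a::field set \<Rightarrow> 'a poly \<Rightarrow> bool" where
  "splits_in K P \<longleftrightarrow> (\<exists>c rs. P = smult c (\<Prod>r\<leftarrow>rs. [:- r, 1:]) \<and> set rs \<subseteq> K)"

definition is_splitting_field :: "'a::field set \<Rightarrow> 'a set \<Rightarrow> 'a poly \<Rightarrow> bool" where
  "is_splitting_field F E P \<longleftrightarrow> is_subfield E \<and> F \<subseteq> E \<and> splits_in E P \<and>
     E = gen_subfield F {x \<in> E. poly P x = 0}"

definition irreducible_over :: "'a::field set \<Rightarrow> 'a poly \<Rightarrow> bool" where
  "irreducible_over F P \<longleftrightarrow> poly_over F P \<and> degree P \<ge> 1 \<and>
     \<not> (\<exists>A B. poly_over F A \<and> poly_over F B \<and> degree A \<ge> 1 \<and> degree B \<ge> 1 \<and> P = A * B)"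

definition algebraic_over :: "'a::field set \<Rightarrow> 'a \<Rightarrow> bool" where
  "algebraic_over F x \<longleftrightarrow> (\<exists>P. P \<noteq> 0 \<and> poly_over F P \<and> poly P x = 0)"

definition normal_extension :: "'a::field set \<Rightarrow> 'a set \<Rightarrow> bool" where
  "normal_extension F K \<longleftrightarrow> is_subfield F \<and> is_subfield K \<and> F \<subseteq> K \<and>
     (\<forall>x\<in>K. algebraic_over F x) \<and>
     (\<forall>P. irreducible_over F P \<and> (\<exists>x\<in>K. poly P x = 0) \<longrightarrow> splits_in K P)"

definition q_poly :: "nat \<Rightarrow> nat \<Rightarrow> (nat \<Rightarrow> 'a::field) \<Rightarrow> 'a poly" where
  "q_poly q n a = monom 1 (q ^ n) + (\<Sum>i<n. monom (a i) (q ^ i))"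

end

(*
  If D v = 0 with v <> 0, the q-polynomial M = sum_j v_j x^(q^j) vanishes at every alpha_i.
  Since x |-> x^q is additive and fixes F_q, M is F_q-linear, so it vanishes at all q^n
  F_q-combinations of the alpha_i, which are distinct; but M <> 0 has degree at most q^(n-1).

  Raising the entries of D to the q-th power shifts its columns, and the new last column is
  -sum_l a_l alpha_i^(q^l) because L(alpha_i) = 0. Hence D^(q) = D C for the companion matrix C
  of L, and as the Frobenius commutes with det, delta^q = delta det C, i.e. delta^(q-1) = det C.

  F contains the q - 1 distinct (q-1)-th roots of unity, so F(delta) is a Kummer extension:
  for g in F[x] the polynomial prod_zeta (X - g(zeta delta)) has coefficients in F (they are
  polynomials in delta invariant under delta |-> zeta delta, hence in delta^(q-1)), vanishes
  at g(delta) and splits over F[delta]. Thus F[delta] is a field algebraic over F, and every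
  irreducible polynomial over F with a root g(delta) divides this product, hence splits.
*)
theory Submission
  imports Defs "Jordan_Normal_Form.Char_Poly"
begin

section \<open>Subfields and polynomials over a subfield\<close>

lemma subfield_zero: "is_subfield K \<Longrightarrow> 0 \<in> K"
  and subfield_one: "is_subfield K \<Longrightarrow> 1 \<in> K"
  and subfield_add: "is_subfield K \<Longrightarrow> x \<in> K \<Longrightarrow> y \<in> K \<Longrightarrow> x + y \<in> K"
  and subfield_diff: "is_subfield K \<Longrightarrow> x \<in> K \<Longrightarrow> y \<in> K \<Longrightarrow> x - y \<in> K"
  and subfield_mult: "is_subfield K \<Longrightarrow> x \<in> K \<Longrightarrow> y \<in> K \<Longrightarrow> x * y \<in> K"
  and subfield_inverse: "is_subfield K \<Longrightarrow> x \<in> K \<Longrightarrow> inverse x \<in> K"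
  by (auto simp: is_subfield_def)

lemma subfield_uminus: "is_subfield K \<Longrightarrow> x \<in> K \<Longrightarrow> - x \<in> K"
  using subfield_diff[of K 0 x] by (simp add: subfield_zero)

lemma subfield_divide: "is_subfield K \<Longrightarrow> x \<in> K \<Longrightarrow> y \<in> K \<Longrightarrow> x / y \<in> K"
  by (simp add: divide_inverse subfield_mult subfield_inverse)

lemma subfield_power: "is_subfield K \<Longrightarrow> x \<in> K \<Longrightarrow> x ^ m \<in> K"
  by (induction m) (auto simp: subfield_one subfield_mult)

lemma subfield_sum: "is_subfield K \<Longrightarrow> (\<And>x. x \<in> A \<Longrightarrow> f x \<in> K) \<Longrightarrow> sum f A \<in> K"
  by (induction A rule: infinite_finite_induct) (auto simp: subfield_zero subfield_add)

lemma subfield_prod: "is_subfield K \<Longrightarrow> (\<And>x. x \<in> A \<Longrightarrow> f x \<in> K) \<Longrightarrow> prod f A \<in> K"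
  by (induction A rule: infinite_finite_induct) (auto simp: subfield_one subfield_mult)

lemma subfield_poly:
  "is_subfield K \<Longrightarrow> F \<subseteq> K \<Longrightarrow> poly_over F g \<Longrightarrow> y \<in> K \<Longrightarrow> poly g y \<in> K"
  unfolding poly_altdef poly_over_def by (auto intro!: subfield_sum subfield_mult subfield_power)

lemma det_in_subfield:
  assumes K: "is_subfield K" and "\<And>i j. i < n \<Longrightarrow> j < n \<Longrightarrow> f i j \<in> K"
  shows "det (mat n n (\<lambda>(i, j). f i j)) \<in> K"
proof -
  have "(signof \<pi> :: 'a) \<in> K" for \<pi>
    using K by (simp add: sign_def subfield_one subfield_uminus)
  then show ?thesis
    unfolding det_def using assms
    by (auto intro!: subfield_sum subfield_mult subfield_prod simp: permutes_def)
qed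

lemma is_subfield_gen_subfield: "is_subfield (gen_subfield F S)"
  unfolding gen_subfield_def is_subfield_def by auto

lemma gen_subfield_superset: "F \<union> S \<subseteq> gen_subfield F S"
  unfolding gen_subfield_def by auto

lemma gen_subfield_least: "is_subfield K \<Longrightarrow> F \<union> S \<subseteq> K \<Longrightarrow> gen_subfield F S \<subseteq> K"
  unfolding gen_subfield_def by auto

lemma poly_over_zero: "is_subfield F \<Longrightarrow> poly_over F 0"
  and poly_over_const: "is_subfield F \<Longrightarrow> a \<in> F \<Longrightarrow> poly_over F [:a:]"
  and poly_over_one: "is_subfield F \<Longrightarrow> poly_over F 1"
  and poly_over_X: "is_subfield F \<Longrightarrow> poly_over F [:0, 1:]"
  and poly_over_monom: "is_subfield F \<Longrightarrow> a \<in> F \<Longrightarrow> poly_over F (monom a m)"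
  by (auto simp: poly_over_def coeff_pCons one_pCons subfield_zero subfield_one
      split: nat.splits)

lemma poly_over_add: "is_subfield F \<Longrightarrow> poly_over F A \<Longrightarrow> poly_over F B \<Longrightarrow> poly_over F (A + B)"
  and poly_over_diff: "is_subfield F \<Longrightarrow> poly_over F A \<Longrightarrow> poly_over F B \<Longrightarrow> poly_over F (A - B)"
  and poly_over_uminus: "is_subfield F \<Longrightarrow> poly_over F A \<Longrightarrow> poly_over F (- A)"
  and poly_over_smult: "is_subfield F \<Longrightarrow> a \<in> F \<Longrightarrow> poly_over F A \<Longrightarrow> poly_over F (smult a A)"
  by (simp_all add: poly_over_def subfield_add subfield_diff subfield_uminus subfield_mult)

lemma poly_over_mult: "is_subfield F \<Longrightarrow> poly_over F A \<Longrightarrow> poly_over F B \<Longrightarrow> poly_over F (A * B)"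
  unfolding poly_over_def
  by (auto intro!: coeff_mult_semiring_closed simp: subfield_zero subfield_add subfield_mult)

lemma poly_over_pcompose:
  "is_subfield F \<Longrightarrow> poly_over F A \<Longrightarrow> poly_over F B \<Longrightarrow> poly_over F (A \<circ>\<^sub>p B)"
  unfolding poly_over_def
  by (auto intro!: coeff_pcompose_semiring_closed simp: subfield_zero subfield_add subfield_mult)

lemma poly_over_pCons_iff: "poly_over F (pCons a A) \<longleftrightarrow> a \<in> F \<and> poly_over F A"
  unfolding poly_over_def by (metis coeff_pCons_0 coeff_pCons_Suc not0_implies_Suc)

lemma coeff_prod_semiring_closed:
  fixes f :: "'b \<Rightarrow> 'a::comm_semiring_1 poly"
  assumes "0 \<in> R" "1 \<in> R" "\<And>x y. x \<in> R \<Longrightarrow> y \<in> R \<Longrightarrow> x + y \<in> R"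
    and "\<And>x y. x \<in> R \<Longrightarrow> y \<in> R \<Longrightarrow> x * y \<in> R"
    and "\<And>x i. x \<in> A \<Longrightarrow> coeff (f x) i \<in> R"
  shows "coeff (prod f A) i \<in> R"
  using assms(5)
proof (induction A arbitrary: i rule: infinite_finite_induct)
  case (insert x A)
  then show ?case by (simp add: coeff_mult_semiring_closed assms(1,3,4))
qed (use assms(1,2) in simp_all)

lemma frobenius_comm_ring_hom:
  assumes "prime CHAR('a::comm_ring_1)" and "m = CHAR('a) ^ k"
  shows "comm_ring_hom (\<lambda>x::'a. x ^ m)"
  by unfold_locales (use assms in \<open>simp_all add: freshmans_dream' power_mult_distrib power_0_left\<close>)

lemma card_roots_power_eq_power:
  assumes "s < r"
  shows "finite {x::'a::field. x ^ r = x ^ s}" and "card {x::'a. x ^ r = x ^ s} \<le> r"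
proof -
  define P :: "'a poly" where "P = monom 1 r - monom 1 s"
  have "coeff P r = 1"
    using assms by (simp add: P_def)
  then have "P \<noteq> 0" by auto
  moreover have "degree P \<le> r"
    unfolding P_def by (rule degree_le) (use assms in \<open>auto\<close>)
  moreover have "{x. x ^ r = x ^ s} = {x. poly P x = 0}"
    by (simp add: P_def poly_monom)
  ultimately show "finite {x::'a. x ^ r = x ^ s}" and "card {x::'a. x ^ r = x ^ s} \<le> r"
    using poly_roots_finite[of P] card_poly_roots_bound[of P] by auto
qed

section \<open>The Moore determinant\<close>

definition moore_mat :: "nat \<Rightarrow> nat \<Rightarrow> (nat \<Rightarrow> 'a::comm_ring_1) \<Rightarrow> 'a mat" where
  "moore_mat q n \<alpha> = mat n n (\<lambda>(i, j). \<alpha> i ^ (q ^ j))"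

definition linearized_poly :: "nat \<Rightarrow> nat \<Rightarrow> (nat \<Rightarrow> 'a::comm_ring_1) \<Rightarrow> 'a poly" where
  "linearized_poly q n v = (\<Sum>j<n. monom (v j) (q ^ j))"

lemma poly_linearized_poly: "poly (linearized_poly q n v) x = (\<Sum>j<n. v j * x ^ (q ^ j))"
  by (simp add: linearized_poly_def poly_sum poly_monom)

lemma power_power_eq_self: "x ^ q = x \<Longrightarrow> x ^ (q ^ j) = (x::'a::monoid_mult)"
  by (induction j) (simp_all add: power_Suc2 power_mult)

lemma poly_linearized_poly_combination:
  fixes x :: "'b \<Rightarrow> 'a::comm_ring_1"
  assumes p: "prime CHAR('a)" and q: "q = CHAR('a) ^ k" and c: "\<And>i. i \<in> I \<Longrightarrow> c i ^ q = c i"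
  shows "poly (linearized_poly q n v) (\<Sum>i\<in>I. c i * x i) =
           (\<Sum>i\<in>I. c i * poly (linearized_poly q n v) (x i))"
proof -
  have frob: "(\<Sum>i\<in>I. c i * x i) ^ (q ^ j) = (\<Sum>i\<in>I. c i * x i ^ (q ^ j))" for j
  proof -
    interpret comm_ring_hom "\<lambda>y::'a. y ^ (q ^ j)"
      by (rule frobenius_comm_ring_hom[OF p, where k = "k * j"]) (simp add: q power_mult)
    show ?thesis
      using c by (simp add: hom_sum power_mult_distrib power_power_eq_self)
  qed
  show ?thesis
    unfolding poly_linearized_poly frob sum_distrib_left
    by (subst sum.swap) (simp add: mult_ac)
qed

lemma linearized_poly_nonzero:
  assumes "q > 1" and "j < n" and "v j \<noteq> 0"
  shows "linearized_poly q n v \<noteq> 0"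
proof -
  have "coeff (linearized_poly q n v) (q ^ j) = v j"
    using assms by (simp add: linearized_poly_def coeff_sum power_inject_exp sum.delta)
  with assms(3) show ?thesis by auto
qed

lemma degree_linearized_poly:
  assumes "q > 0"
  shows "degree (linearized_poly q n v) \<le> q ^ (n - 1)"
  unfolding linearized_poly_def
  by (intro degree_sum_le order_trans[OF degree_monom_le] power_increasing) (use assms in auto)

lemma card_fixed_field_combinations:
  fixes \<alpha> :: "nat \<Rightarrow> 'a::field"
  assumes p: "prime CHAR('a)" and q: "q = CHAR('a) ^ k"
    and card: "card {x::'a. x ^ q = x} = q"
    and indep: "\<forall>c. (\<forall>i<n. c i ^ q = c i) \<and> (\<Sum>i<n. c i * \<alpha> i) = 0 \<longrightarrow> (\<forall>i<n. c i = 0)"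
  shows "card ((\<lambda>c. \<Sum>i<n. c i * \<alpha> i) ` (PiE {..<n} (\<lambda>_. {x. x ^ q = x}))) = q ^ n"
proof -
  interpret frob: comm_ring_hom "\<lambda>y::'a. y ^ q"
    by (rule frobenius_comm_ring_hom[OF p q])
  have "inj_on (\<lambda>c. \<Sum>i<n. c i * \<alpha> i) (PiE {..<n} (\<lambda>_. {x. x ^ q = x}))"
  proof (rule inj_onI)
    fix c c' assume c: "c \<in> PiE {..<n} (\<lambda>_. {x. x ^ q = x})" and c': "c' \<in> PiE {..<n} (\<lambda>_. {x. x ^ q = x})"
      and eq: "(\<Sum>i<n. c i * \<alpha> i) = (\<Sum>i<n. c' i * \<alpha> i)"
    have "\<forall>i<n. (c i - c' i) ^ q = c i - c' i"
      using c c' by (auto simp: frob.hom_minus PiE_iff)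
    moreover have "(\<Sum>i<n. (c i - c' i) * \<alpha> i) = 0"
      using eq by (simp add: left_diff_distrib sum_subtractf)
    ultimately have "\<forall>i<n. c i - c' i = 0"
      using indep[rule_format, of "\<lambda>i. c i - c' i"] by blast
    then show "c = c'"
      using c c' by (intro PiE_ext) auto
  qed
  then show ?thesis
    by (simp add: card_image card_PiE card)
qed

lemma moore_det_nonzero:
  fixes \<alpha> :: "nat \<Rightarrow> 'a::field"
  assumes p: "prime CHAR('a)" and q: "q = CHAR('a) ^ k" and "q > 1"
    and card: "card {x::'a. x ^ q = x} = q"
    and indep: "\<forall>c. (\<forall>i<n. c i ^ q = c i) \<and> (\<Sum>i<n. c i * \<alpha> i) = 0 \<longrightarrow> (\<forall>i<n. c i = 0)"
  shows "det (moore_mat q n \<alpha>) \<noteq> 0"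
proof
  assume "det (moore_mat q n \<alpha>) = 0"
  then obtain v where v: "v \<in> carrier_vec n" "v \<noteq> 0\<^sub>v n" "moore_mat q n \<alpha> *\<^sub>v v = 0\<^sub>v n"
    using det_0_iff_vec_prod_zero_field[of "moore_mat q n \<alpha>" n] by (auto simp: moore_mat_def)
  have "\<exists>j<n. v $ j \<noteq> 0"
  proof (rule ccontr)
    assume "\<not> (\<exists>j<n. v $ j \<noteq> 0)"
    then have "v = 0\<^sub>v n"
      using v(1) by (intro eq_vecI) auto
    with v(2) show False ..
  qed
  then obtain j where j: "j < n" "v $ j \<noteq> 0"
    by blast
  define M where "M = linearized_poly q n (\<lambda>j. v $ j)"
  have "poly M (\<alpha> i) = (moore_mat q n \<alpha> *\<^sub>v v) $ i" if "i < n" for i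
    using that v(1) by (simp add: M_def poly_linearized_poly moore_mat_def scalar_prod_def
        atLeast0LessThan mult.commute)
  then have roots: "poly M (\<alpha> i) = 0" if "i < n" for i
    using that v(3) by simp
  define S where "S = (\<lambda>c. \<Sum>i<n. c i * \<alpha> i) ` (PiE {..<n} (\<lambda>_. {x::'a. x ^ q = x}))"
  have S_roots: "S \<subseteq> {x. poly M x = 0}"
  proof (clarsimp simp: S_def)
    fix c assume c: "c \<in> PiE {..<n} (\<lambda>_. {x::'a. x ^ q = x})"
    have "poly M (\<Sum>i<n. c i * \<alpha> i) = (\<Sum>i<n. c i * poly M (\<alpha> i))"
      unfolding M_def by (rule poly_linearized_poly_combination[OF p q]) (use c in \<open>auto simp: PiE_iff\<close>)
    then show "poly M (\<Sum>i<n. c i * \<alpha> i) = 0"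
      by (simp add: roots)
  qed
  have M0: "M \<noteq> 0"
    unfolding M_def using linearized_poly_nonzero[of q j n "\<lambda>j. v $ j"] \<open>q > 1\<close> j by simp
  have "q ^ n = card S"
    using card_fixed_field_combinations[OF p q card indep] by (simp add: S_def)
  also have "\<dots> \<le> card {x. poly M x = 0}"
    by (rule card_mono[OF poly_roots_finite[OF M0] S_roots])
  also have "\<dots> \<le> degree M"
    by (rule card_poly_roots_bound[OF M0])
  also have "\<dots> \<le> q ^ (n - 1)"
    unfolding M_def by (rule degree_linearized_poly) (use \<open>q > 1\<close> in simp)
  also have "\<dots> < q ^ n"
    using \<open>q > 1\<close> j(1) by (intro power_strict_increasing) auto
  finally show False by simp
qed

definition q_companion_mat :: "nat \<Rightarrow> (nat \<Rightarrow> 'a::comm_ring_1) \<Rightarrow> 'a mat" where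
  "q_companion_mat n a = mat n n (\<lambda>(l, j). if Suc j < n then of_bool (l = Suc j) else - a l)"

lemma moore_mat_mult_q_companion_mat:
  fixes \<alpha> :: "nat \<Rightarrow> 'a::field"
  assumes roots: "\<And>i. i < n \<Longrightarrow> poly (q_poly q n a) (\<alpha> i) = 0"
  shows "moore_mat q n \<alpha> * q_companion_mat n a = map_mat (\<lambda>x. x ^ q) (moore_mat q n \<alpha>)"
proof (rule eq_matI)
  fix i j assume "i < dim_row (map_mat (\<lambda>x. x ^ q) (moore_mat q n \<alpha>))"
    and "j < dim_col (map_mat (\<lambda>x. x ^ q) (moore_mat q n \<alpha>))"
  then have i: "i < n" and j: "j < n" by (simp_all add: moore_mat_def)
  have "(moore_mat q n \<alpha> * q_companion_mat n a) $$ (i, j) =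
          (\<Sum>l<n. \<alpha> i ^ (q ^ l) * q_companion_mat n a $$ (l, j))"
    using i j by (simp add: moore_mat_def q_companion_mat_def scalar_prod_def atLeast0LessThan)
  also have "\<dots> = \<alpha> i ^ (q ^ Suc j)"
  proof (cases "Suc j < n")
    case True
    have "(\<Sum>l<n. \<alpha> i ^ (q ^ l) * q_companion_mat n a $$ (l, j)) =
            (\<Sum>l<n. if l = Suc j then \<alpha> i ^ (q ^ l) else 0)"
      using True j by (intro sum.cong) (auto simp: q_companion_mat_def)
    then show ?thesis
      using True by simp
  next
    case False
    then have "Suc j = n" using j by simp
    moreover have "\<alpha> i ^ (q ^ n) = - (\<Sum>l<n. a l * \<alpha> i ^ (q ^ l))"
      using roots[OF i] by (simp add: q_poly_def poly_sum poly_monom eq_neg_iff_add_eq_0)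
    ultimately show ?thesis
      using False by (simp add: q_companion_mat_def sum_negf mult.commute)
  qed
  also have "\<dots> = map_mat (\<lambda>x. x ^ q) (moore_mat q n \<alpha>) $$ (i, j)"
    using i j by (simp add: moore_mat_def mult.commute flip: power_mult)
  finally show "(moore_mat q n \<alpha> * q_companion_mat n a) $$ (i, j) =
                  map_mat (\<lambda>x. x ^ q) (moore_mat q n \<alpha>) $$ (i, j)" .
qed (simp_all add: moore_mat_def q_companion_mat_def)

lemma moore_det_power_in_subfield:
  fixes \<alpha> :: "nat \<Rightarrow> 'a::field"
  assumes p: "prime CHAR('a)" and q: "q = CHAR('a) ^ k"
    and F: "is_subfield F" and a: "\<And>i. i < n \<Longrightarrow> a i \<in> F"
    and roots: "\<And>i. i < n \<Longrightarrow> poly (q_poly q n a) (\<alpha> i) = 0"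
    and nz: "det (moore_mat q n \<alpha>) \<noteq> 0"
  shows "det (moore_mat q n \<alpha>) ^ (q - 1) \<in> F"
proof -
  interpret frob: comm_ring_hom "\<lambda>x::'a. x ^ q"
    by (rule frobenius_comm_ring_hom[OF p q])
  have "det (moore_mat q n \<alpha>) * det (moore_mat q n \<alpha>) ^ (q - 1) = det (moore_mat q n \<alpha>) ^ q"
    using q p by (simp add: Suc_diff_1 prime_gt_0_nat flip: power_Suc)
  also have "\<dots> = det (moore_mat q n \<alpha> * q_companion_mat n a)"
    by (simp add: moore_mat_mult_q_companion_mat roots)
  also have "\<dots> = det (moore_mat q n \<alpha>) * det (q_companion_mat n a)"
    by (rule det_mult[of _ n]) (simp_all add: moore_mat_def q_companion_mat_def)
  finally have "det (moore_mat q n \<alpha>) ^ (q - 1) = det (q_companion_mat n a)"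
    using nz by simp
  moreover have "det (q_companion_mat n a) \<in> F"
    unfolding q_companion_mat_def
    by (rule det_in_subfield[OF F]) (auto simp: a F subfield_zero subfield_one subfield_uminus)
  ultimately show ?thesis by simp
qed

section \<open>Divisibility over a subfield\<close>

lemma poly_over_div_mod:
  assumes F: "is_subfield F" and A: "poly_over F A" and B: "poly_over F B"
  shows "poly_over F (A div B) \<and> poly_over F (A mod B)"
  using A
proof (induction "degree A" arbitrary: A rule: less_induct)
  case less
  show ?case
  proof (cases "B = 0 \<or> degree A < degree B")
    case True
    then show ?thesis
      using less.prems by (auto simp: div_poly_less mod_poly_less poly_over_zero[OF F])
  next
    case False
    define m where "m = monom (lead_coeff A / lead_coeff B) (degree A - degree B)"
    define A' where "A' = A - m * B"
    have "lead_coeff A / lead_coeff B \<in> F"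
      using less.prems B F by (simp add: poly_over_def subfield_divide)
    then have m: "poly_over F m"
      unfolding m_def by (rule poly_over_monom[OF F])
    have A': "poly_over F A'"
      unfolding A'_def by (intro poly_over_diff poly_over_mult F m B less.prems)
    have div: "A div B = m + A' div B"
      using False div_mult_self1[of B A' m] by (simp add: A'_def)
    have mod: "A mod B = A' mod B"
      using mod_mult_self1[of A' m B] by (simp add: A'_def)
    show ?thesis
    proof (cases "A' = 0")
      case True
      then show ?thesis
        using div mod m F by (simp add: poly_over_zero)
    next
      case A'0: False
      have "coeff (m * B) (degree A - degree B + degree B) = lead_coeff A"
        using False by (simp only: m_def coeff_monom_mult) simp
      then have lc: "coeff (m * B) (degree A) = lead_coeff A"
        using False by simp
      have "degree (m * B) \<le> degree A"
        using False degree_mult_le[of m B]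
          degree_monom_le[of "lead_coeff A / lead_coeff B" "degree A - degree B"]
        unfolding m_def by linarith
      then have "degree A' \<le> degree A"
        unfolding A'_def by (intro degree_diff_le) simp_all
      moreover have "coeff A' (degree A) = 0"
        by (simp add: A'_def lc)
      ultimately have "degree A' < degree A"
        using A'0 by (rule degree_less_if_less_eqI)
      from less.hyps[OF this A'] show ?thesis
        using div mod m F by (simp add: poly_over_add)
    qed
  qed
qed

lemma min_degree_root_poly_dvd:
  assumes F: "is_subfield F" and M: "poly_over F M" "M \<noteq> 0" "poly M x = 0"
    and min: "\<And>R. poly_over F R \<Longrightarrow> R \<noteq> 0 \<Longrightarrow> poly R x = 0 \<Longrightarrow> degree M \<le> degree R"
    and R: "poly_over F R" "poly R x = 0"
  shows "M dvd R"
proof (rule ccontr)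
  assume "\<not> M dvd R"
  have "poly_over F (R mod M)"
    using poly_over_div_mod[OF F R(1) M(1)] by simp
  moreover from \<open>\<not> M dvd R\<close> have "R mod M \<noteq> 0"
    by (simp add: mod_eq_0_iff_dvd)
  moreover have "poly (R mod M) x = 0"
    using R(2) M(3) by (simp add: poly_mod)
  ultimately have "degree M \<le> degree (R mod M)"
    by (rule min)
  with degree_mod_less'[OF M(2) \<open>R mod M \<noteq> 0\<close>] show False
    by simp
qed

lemma irreducible_over_dvd:
  assumes F: "is_subfield F" and P: "irreducible_over F P" and "poly P x = 0"
    and Q: "poly_over F Q" "Q \<noteq> 0" "poly Q x = 0"
  shows "P dvd Q"
proof -
  define S where "S = {R. poly_over F R \<and> R \<noteq> 0 \<and> poly R x = 0}"
  have "Q \<in> S"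
    using Q by (simp add: S_def)
  then obtain M where "M \<in> S" and M_min: "\<And>R. R \<in> S \<Longrightarrow> degree M \<le> degree R"
    using ex_has_least_nat[of "\<lambda>R. R \<in> S" Q degree] by blast
  then have M: "poly_over F M" "M \<noteq> 0" "poly M x = 0"
    by (simp_all add: S_def)
  have M_dvd: "M dvd R" if "poly_over F R" "poly R x = 0" for R
    using min_degree_root_poly_dvd[OF F M _ that] M_min by (simp add: S_def)
  have PF: "poly_over F P" and "P \<noteq> 0"
    using P by (auto simp: irreducible_over_def)
  define H where "H = P div M"
  have P_eq: "P = M * H"
    using M_dvd[OF PF \<open>poly P x = 0\<close>] by (simp add: H_def)
  have "degree M \<noteq> 0"
  proof
    assume "degree M = 0"
    then obtain c where "M = [:c:]" by (rule degree_eq_zeroE)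
    with M show False by simp
  qed
  moreover have "poly_over F H"
    using poly_over_div_mod[OF F PF M(1)] by (simp add: H_def)
  moreover have "\<not> (poly_over F M \<and> poly_over F H \<and> 1 \<le> degree M \<and> 1 \<le> degree H \<and> P = M * H)"
    using P unfolding irreducible_over_def by blast
  ultimately have "degree H = 0"
    using M(1) P_eq by simp
  then have "is_unit H"
    using \<open>P \<noteq> 0\<close> P_eq by (simp add: is_unit_iff_degree)
  then show ?thesis
    using M_dvd[OF Q(1,3)] P_eq by (simp add: mult_unit_dvd_iff)
qed

lemma dvd_prod_linear_factors:
  fixes P :: "'a::field poly"
  assumes "P dvd (\<Prod>r\<leftarrow>rs. [:- r, 1:])"
  shows "\<exists>c rs'. P = smult c (\<Prod>r\<leftarrow>rs'. [:- r, 1:]) \<and> set rs' \<subseteq> set rs"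
  using assms
proof (induction rs arbitrary: P)
  case Nil
  then have "degree P = 0"
    by (auto simp: is_unit_iff_degree)
  then obtain c where "P = [:c:]"
    by (rule degree_eq_zeroE)
  then show ?case
    by (intro exI[of _ c] exI[of _ "[]"]) simp
next
  case (Cons r rs)
  show ?case
  proof (cases "poly P r = 0")
    case True
    then obtain P' where P': "P = [:- r, 1:] * P'"
      by (auto simp: poly_eq_0_iff_dvd elim: dvdE)
    with Cons.prems have "[:- r, 1:] * P' dvd [:- r, 1:] * (\<Prod>r\<leftarrow>rs. [:- r, 1:])"
      by (simp only: list.map prod_list.Cons)
    then have "P' dvd (\<Prod>r\<leftarrow>rs. [:- r, 1:])"
      by (simp add: dvd_times_left_cancel_iff del: mult_pCons_left)
    with Cons.IH obtain c rs' where "P' = smult c (\<Prod>r\<leftarrow>rs'. [:- r, 1:])" "set rs' \<subseteq> set rs"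
      by blast
    with P' show ?thesis
      by (intro exI[of _ c] exI[of _ "r # rs'"]) auto
  next
    case False
    have "P dvd [:- r, 1:] * (\<Prod>r\<leftarrow>rs. [:- r, 1:])"
      using Cons.prems by (simp only: list.map prod_list.Cons)
    then obtain T where T: "[:- r, 1:] * (\<Prod>r\<leftarrow>rs. [:- r, 1:]) = P * T"
      by (rule dvdE)
    have "poly P r * poly T r = 0"
      using arg_cong[OF T, of "\<lambda>X. poly X r"] by simp
    with False obtain T' where T': "T = [:- r, 1:] * T'"
      by (auto simp: poly_eq_0_iff_dvd elim: dvdE)
    have "[:- r, 1:] * (\<Prod>r\<leftarrow>rs. [:- r, 1:]) = [:- r, 1:] * (P * T')"
      using T unfolding T' by (simp only: mult.left_commute)
    then have "P dvd (\<Prod>r\<leftarrow>rs. [:- r, 1:])"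
      by (simp del: mult_pCons_left)
    with Cons.IH show ?thesis
      by fastforce
  qed
qed

lemma splits_in_dvd:
  assumes "splits_in K Q" and "Q \<noteq> 0" and "P dvd Q"
  shows "splits_in K P"
proof -
  obtain c rs where Q: "Q = smult c (\<Prod>r\<leftarrow>rs. [:- r, 1:])" and "set rs \<subseteq> K"
    using assms(1) by (auto simp: splits_in_def)
  with assms(2) have "P dvd (\<Prod>r\<leftarrow>rs. [:- r, 1:])"
    using assms(3) by (simp add: dvd_smult_iff)
  then obtain c' rs' where "P = smult c' (\<Prod>r\<leftarrow>rs'. [:- r, 1:])" and "set rs' \<subseteq> set rs"
    using dvd_prod_linear_factors by blast
  with \<open>set rs \<subseteq> K\<close> show ?thesis
    unfolding splits_in_def by blast
qed

lemma splits_in_prod_linear: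
  assumes "finite A" and "f ` A \<subseteq> K"
  shows "splits_in K (\<Prod>x\<in>A. [:- f x, 1:])"
proof -
  obtain xs where "set xs = A" "distinct xs"
    using finite_distinct_list[OF assms(1)] by blast
  then have "(\<Prod>x\<in>A. [:- f x, 1:]) = smult 1 (\<Prod>r\<leftarrow>map f xs. [:- r, 1:])"
    by (simp add: prod.distinct_set_conv_list o_def flip: \<open>set xs = A\<close>)
  then show ?thesis
    unfolding splits_in_def using assms(2) \<open>set xs = A\<close>
    by (intro exI[of _ 1] exI[of _ "map f xs"]) auto
qed

lemma inverse_poly_value:
  assumes F: "is_subfield F" and "y \<noteq> 0"
    and "poly_over F Q" "Q \<noteq> 0" "poly Q y = 0"
  shows "\<exists>h. poly_over F h \<and> inverse y = poly h y"
  using assms(3-)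
proof (induction Q rule: pCons_induct)
  case (pCons a Q)
  then have a: "a \<in> F" and Q: "poly_over F Q" and root: "a + y * poly Q y = 0"
    by (simp_all add: poly_over_pCons_iff)
  show ?case
  proof (cases "a = 0")
    case True
    then show ?thesis
      using pCons root Q \<open>y \<noteq> 0\<close> by auto
  next
    case False
    have "y * poly Q y = - a"
      using root by (simp add: eq_neg_iff_add_eq_0 add.commute)
    then have "inverse y = poly (smult (- inverse a) Q) y"
      using False \<open>y \<noteq> 0\<close> by (simp add: field_simps)
    moreover have "poly_over F (smult (- inverse a) Q)"
      using F a Q by (intro poly_over_smult) (auto simp: subfield_uminus subfield_inverse)
    ultimately show ?thesis by blast
  qed
qed simp

section \<open>Adjoining a radical\<close>

lemma roots_of_unity_exponent_dvd:
  assumes N: "N > 0" and card: "card {\<zeta>::'a::field. \<zeta> ^ N = 1} = N"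
    and exp: "\<And>\<zeta>. \<zeta> ^ N = 1 \<Longrightarrow> \<zeta> ^ i = (1::'a)"
  shows "N dvd i"
proof (rule ccontr)
  assume "\<not> N dvd i"
  then have r: "0 < i mod N" "i mod N < N"
    using N by (simp_all add: mod_greater_zero_iff_not_dvd)
  have sub: "{\<zeta>::'a. \<zeta> ^ N = 1} \<subseteq> {\<zeta>. \<zeta> ^ (i mod N) = \<zeta> ^ 0}"
  proof clarsimp
    fix \<zeta> :: 'a assume "\<zeta> ^ N = 1"
    moreover have "\<zeta> ^ i = (\<zeta> ^ N) ^ (i div N) * \<zeta> ^ (i mod N)"
      by (simp flip: power_mult power_add)
    ultimately show "\<zeta> ^ (i mod N) = 1"
      using exp by simp
  qed
  have "N \<le> card {\<zeta>::'a. \<zeta> ^ (i mod N) = \<zeta> ^ 0}"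
    using card_mono[OF card_roots_power_eq_power(1)[OF r(1)] sub] card by simp
  also have "\<dots> \<le> i mod N"
    by (rule card_roots_power_eq_power(2)[OF r(1)])
  finally show False
    using r(2) by simp
qed

lemma poly_in_subfield_if_rotation_invariant:
  fixes h :: "'a::field poly"
  assumes F: "is_subfield F" and h: "poly_over F h"
    and N: "N > 0" "card {\<zeta>::'a. \<zeta> ^ N = 1} = N"
    and inv: "\<And>\<zeta>. \<zeta> ^ N = 1 \<Longrightarrow> h \<circ>\<^sub>p [:0, \<zeta>:] = h" and \<delta>: "\<delta> ^ N \<in> F"
  shows "poly h \<delta> \<in> F"
  unfolding poly_altdef
proof (rule subfield_sum[OF F])
  fix i
  show "coeff h i * \<delta> ^ i \<in> F"
  proof (cases "coeff h i = 0")
    case False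
    have "\<zeta> ^ i = 1" if "\<zeta> ^ N = 1" for \<zeta> :: 'a
      using arg_cong[OF inv[OF that], of "\<lambda>p. coeff p i"] False by (simp add: coeff_pcompose_linear)
    then have "N dvd i"
      by (rule roots_of_unity_exponent_dvd[OF N])
    then have "\<delta> ^ i \<in> F"
      using \<delta> F by (auto simp: power_mult subfield_power elim!: dvdE)
    with h F show ?thesis
      by (simp add: poly_over_def subfield_mult)
  qed (simp add: F subfield_zero)
qed

lemma prod_roots_of_unity_reindex_mult:
  assumes "N > 0" and "\<zeta>' ^ N = (1::'a::field)"
  shows "(\<Prod>\<zeta>\<in>{\<zeta>. \<zeta> ^ N = 1}. f (\<zeta> * \<zeta>')) = (\<Prod>\<zeta>\<in>{\<zeta>. \<zeta> ^ N = 1}. f \<zeta>)"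
proof (rule prod.reindex_bij_witness[of _ "\<lambda>\<zeta>. \<zeta> / \<zeta>'" "\<lambda>\<zeta>. \<zeta> * \<zeta>'"])
  have "\<zeta>' \<noteq> 0"
    using assms by (auto simp: power_0_left)
  then show "\<And>\<zeta>. \<zeta> / \<zeta>' * \<zeta>' = \<zeta>" "\<And>\<zeta>. \<zeta> * \<zeta>' / \<zeta>' = \<zeta>"
    by simp_all
qed (use assms in \<open>simp_all add: power_divide power_mult_distrib\<close>)

lemma pcompose_scale: "[:0, a:] \<circ>\<^sub>p [:0, b:] = [:0, a * b :: 'a::comm_semiring_1:]"
  by (simp add: pcompose_pCons)

definition conjugates_poly :: "nat \<Rightarrow> 'a::field poly \<Rightarrow> 'a \<Rightarrow> 'a poly" where
  "conjugates_poly N g \<delta> = (\<Prod>\<zeta>\<in>{\<zeta>. \<zeta> ^ N = 1}. [:- poly g (\<zeta> * \<delta>), 1:])"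

lemma poly_over_conjugates_poly:
  fixes g :: "'a::field poly"
  assumes F: "is_subfield F" and g: "poly_over F g"
    and N: "N > 0" "card {\<zeta>::'a. \<zeta> ^ N = 1} = N" and roots_F: "{\<zeta>. \<zeta> ^ N = 1} \<subseteq> F"
    and \<delta>: "\<delta> ^ N \<in> F"
  shows "poly_over F (conjugates_poly N g \<delta>)"
proof -
  define U where "U = {\<zeta>::'a. \<zeta> ^ N = 1}"
  txt \<open>\<open>W\<close> is the same product with \<open>\<delta>\<close> replaced by an indeterminate \<open>Y\<close>; its coefficients
    lie in \<open>F[Y]\<close> and are invariant under \<open>Y \<mapsto> \<zeta> Y\<close>.\<close>
  define W :: "'a poly poly" where "W = (\<Prod>\<zeta>\<in>U. [:- (g \<circ>\<^sub>p [:0, \<zeta>:]), 1:])"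
  have eval: "map_poly (\<lambda>h. poly h \<delta>) W = conjugates_poly N g \<delta>"
  proof -
    interpret map_poly_comm_ring_hom "\<lambda>h::'a poly. poly h \<delta>" ..
    show ?thesis
      by (simp add: W_def U_def conjugates_poly_def hom_prod map_poly_pCons_hom poly_pcompose
          mult.commute)
  qed
  have rotate: "map_poly (\<lambda>h. h \<circ>\<^sub>p [:0, \<zeta>':]) W = W" if "\<zeta>' \<in> U" for \<zeta>'
  proof -
    interpret map_poly_comm_ring_hom "\<lambda>h::'a poly. h \<circ>\<^sub>p [:0, \<zeta>':]" ..
    have "map_poly (\<lambda>h. h \<circ>\<^sub>p [:0, \<zeta>':]) W = (\<Prod>\<zeta>\<in>U. [:- (g \<circ>\<^sub>p [:0, \<zeta> * \<zeta>':]), 1:])"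
      by (simp add: W_def hom_prod map_poly_pCons_hom pcompose_uminus pcompose_scale
          flip: pcompose_assoc)
    also have "\<dots> = W"
      unfolding W_def U_def
      by (rule prod_roots_of_unity_reindex_mult[where f = "\<lambda>\<zeta>. [:- (g \<circ>\<^sub>p [:0, \<zeta>:]), 1:]"])
        (use N(1) that in \<open>simp_all add: U_def\<close>)
    finally show ?thesis .
  qed
  have coeff_W: "poly_over F (coeff W k)" for k
    unfolding W_def
  proof (rule coeff_prod_semiring_closed[where R = "Collect (poly_over F)", simplified])
    show "poly_over F 0" "poly_over F 1"
      using F by (simp_all add: poly_over_zero poly_over_one)
    show "\<And>x y. poly_over F x \<Longrightarrow> poly_over F y \<Longrightarrow> poly_over F (x + y)"
      "\<And>x y. poly_over F x \<Longrightarrow> poly_over F y \<Longrightarrow> poly_over F (x * y)"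
      using F by (simp_all add: poly_over_add poly_over_mult)
    fix \<zeta> i assume "\<zeta> \<in> U"
    then have "poly_over F (g \<circ>\<^sub>p [:0, \<zeta>:])"
      using F g roots_F by (intro poly_over_pcompose) (auto simp: U_def poly_over_def coeff_pCons
          subfield_zero split: nat.splits)
    then show "poly_over F (coeff [:- (g \<circ>\<^sub>p [:0, \<zeta>:]), 1:] i)"
      using F by (auto simp: coeff_pCons poly_over_uminus poly_over_one poly_over_zero split: nat.splits)
  qed
  show ?thesis
    unfolding poly_over_def
  proof
    fix k
    have "coeff (conjugates_poly N g \<delta>) k = poly (coeff W k) \<delta>"
      by (simp add: coeff_map_poly flip: eval)
    also have "\<dots> \<in> F"
    proof (rule poly_in_subfield_if_rotation_invariant[OF F coeff_W N _ \<delta>])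
      fix \<zeta> :: 'a assume "\<zeta> ^ N = 1"
      then show "coeff W k \<circ>\<^sub>p [:0, \<zeta>:] = coeff W k"
        using arg_cong[OF rotate, of \<zeta> "\<lambda>X. coeff X k"] by (simp add: U_def coeff_map_poly)
    qed
    finally show "coeff (conjugates_poly N g \<delta>) k \<in> F" .
  qed
qed

lemma gen_subfield_singleton_eq_poly_values:
  assumes F: "is_subfield F"
    and alg: "\<And>g. poly_over F g \<Longrightarrow> algebraic_over F (poly g \<delta>)"
  shows "gen_subfield F {\<delta>} = {poly g \<delta> | g. poly_over F g}"
proof
  define V where "V = {poly g \<delta> | g. poly_over F g}"
  have V_memI: "poly g \<delta> \<in> V" if "poly_over F g" for g
    using that by (auto simp: V_def)
  have "is_subfield V"
    unfolding is_subfield_def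
  proof (intro conjI ballI impI)
    show "0 \<in> V" "1 \<in> V"
      using V_memI[OF poly_over_zero[OF F]] V_memI[OF poly_over_one[OF F]] by simp_all
    fix x y assume "x \<in> V" "y \<in> V"
    then obtain g h where g: "poly_over F g" "x = poly g \<delta>" and h: "poly_over F h" "y = poly h \<delta>"
      by (auto simp: V_def)
    show "x + y \<in> V" "x - y \<in> V" "x * y \<in> V"
      using V_memI[OF poly_over_add[OF F g(1) h(1)]] V_memI[OF poly_over_diff[OF F g(1) h(1)]]
        V_memI[OF poly_over_mult[OF F g(1) h(1)]] g(2) h(2)
      by simp_all
  next
    fix x assume "x \<in> V" "x \<noteq> 0"
    then obtain g where g: "poly_over F g" "x = poly g \<delta>"
      by (auto simp: V_def)
    obtain Q where "Q \<noteq> 0" "poly_over F Q" "poly Q x = 0"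
      using alg[OF g(1)] g(2) by (auto simp: algebraic_over_def)
    then obtain h where h: "poly_over F h" "inverse x = poly h x"
      using inverse_poly_value[OF F \<open>x \<noteq> 0\<close>] by blast
    show "inverse x \<in> V"
      using V_memI[OF poly_over_pcompose[OF F h(1) g(1)]] h(2) g(2) by (simp add: poly_pcompose)
  qed
  moreover have "F \<union> {\<delta>} \<subseteq> V"
    using V_memI[OF poly_over_const[OF F]] V_memI[OF poly_over_X[OF F]] by auto
  ultimately show "gen_subfield F {\<delta>} \<subseteq> V"
    by (rule gen_subfield_least)
  show "V \<subseteq> gen_subfield F {\<delta>}"
    unfolding V_def
    using is_subfield_gen_subfield gen_subfield_superset[of F "{\<delta>}"]
    by (auto intro: subfield_poly)
qed

lemma normal_extension_adjoin_radical:
  fixes F :: "'a::field set"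
  assumes F: "is_subfield F" and N: "N > 0" "card {\<zeta>::'a. \<zeta> ^ N = 1} = N"
    and roots_F: "{\<zeta>. \<zeta> ^ N = 1} \<subseteq> F" and \<delta>: "\<delta> ^ N \<in> F"
  shows "normal_extension F (gen_subfield F {\<delta>})"
proof -
  define K where "K = gen_subfield F {\<delta>}"
  have fin: "finite {\<zeta>::'a. \<zeta> ^ N = 1}"
    using N by (intro card_ge_0_finite) simp
  have conj_nonzero: "conjugates_poly N g \<delta> \<noteq> 0" for g
    using fin by (simp add: conjugates_poly_def)
  have conj_root: "poly (conjugates_poly N g \<delta>) (poly g \<delta>) = 0" for g
    using fin by (auto simp: conjugates_poly_def poly_prod prod_zero_iff intro!: exI[of _ 1])
  have alg: "algebraic_over F (poly g \<delta>)" if "poly_over F g" for g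
    unfolding algebraic_over_def
    using poly_over_conjugates_poly[OF F that N roots_F \<delta>] conj_nonzero conj_root by blast
  have K: "K = {poly g \<delta> | g. poly_over F g}"
    unfolding K_def using F alg by (rule gen_subfield_singleton_eq_poly_values)
  have conj_splits: "splits_in K (conjugates_poly N g \<delta>)" if g: "poly_over F g" for g
    unfolding conjugates_poly_def
  proof (rule splits_in_prod_linear[OF fin], clarify)
    fix \<zeta> :: 'a assume "\<zeta> ^ N = 1"
    then have "poly_over F (g \<circ>\<^sub>p [:0, \<zeta>:])"
      using F g roots_F by (intro poly_over_pcompose) (auto simp: poly_over_def coeff_pCons
          subfield_zero split: nat.splits)
    then show "poly g (\<zeta> * \<delta>) \<in> K"
      unfolding K by (auto simp: poly_pcompose mult.commute intro!: exI[of _ "g \<circ>\<^sub>p [:0, \<zeta>:]"])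
  qed
  show ?thesis
    unfolding normal_extension_def K_def[symmetric]
  proof (intro conjI allI ballI impI)
    show "is_subfield F" "is_subfield K" "F \<subseteq> K"
      using F is_subfield_gen_subfield gen_subfield_superset[of F "{\<delta>}"] by (simp_all add: K_def)
  next
    fix x assume "x \<in> K"
    then show "algebraic_over F x"
      unfolding K using alg by blast
  next
    fix P assume P: "irreducible_over F P \<and> (\<exists>x\<in>K. poly P x = 0)"
    then obtain g where g: "poly_over F g" and "poly P (poly g \<delta>) = 0"
      unfolding K by blast
    then have "P dvd conjugates_poly N g \<delta>"
      using P poly_over_conjugates_poly[OF F g N roots_F \<delta>] conj_nonzero conj_root
      by (intro irreducible_over_dvd[OF F]) auto
    then show "splits_in K P"
      by (rule splits_in_dvd[OF conj_splits[OF g] conj_nonzero])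
  qed
qed

lemma fixed_points_subset_subfield:
  fixes F :: "'a::field set"
  assumes "q > 1" and card: "card {x \<in> F. x ^ q = x} = q"
  shows "{x. x ^ q = x} \<subseteq> F" and "card {x::'a. x ^ q = x} = q"
proof -
  have "finite {x::'a. x ^ q = x}" and "card {x::'a. x ^ q = x} \<le> q"
    using card_roots_power_eq_power[of 1 q] \<open>q > 1\<close> by simp_all
  moreover have sub: "{x \<in> F. x ^ q = x} \<subseteq> {x. x ^ q = x}"
    by blast
  ultimately have "{x \<in> F. x ^ q = x} = {x. x ^ q = x}"
    using card_mono[OF _ sub] card by (intro card_subset_eq) simp_all
  with card show "{x. x ^ q = x} \<subseteq> F" and "card {x::'a. x ^ q = x} = q"
    by auto
qed

lemma roots_of_unity_eq_fixed_points:
  assumes "q > 1"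
  shows "{\<zeta>::'a::field. \<zeta> ^ (q - 1) = 1} = {x. x ^ q = x} - {0}"
proof -
  have "x ^ q = x * x ^ (q - 1)" for x :: 'a
    using assms by (simp add: Suc_diff_1 flip: power_Suc)
  then show ?thesis
    using assms by (auto simp: power_0_left)
qed

theorem lemma2p1:
  fixes p q k n :: nat and F E :: "'a::field set" and a \<alpha> :: "nat \<Rightarrow> 'a"
  assumes "prime p" and "CHAR('a) = p" and "k \<ge> 1" and "q = p ^ k"
    and "is_subfield F"
    and "card {x \<in> F. x ^ q = x} = q"
    and "n \<ge> 1"
    and "\<forall>i<n. a i \<in> F" and "a 0 \<noteq> 0"
    and "is_splitting_field F E (q_poly q n a)"
    and "\<forall>i<n. \<alpha> i \<in> E \<and> poly (q_poly q n a) (\<alpha> i) = 0"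
    and "\<forall>c. (\<forall>i<n. c i ^ q = c i) \<and> (\<Sum>i<n. c i * \<alpha> i) = 0 \<longrightarrow> (\<forall>i<n. c i = 0)"
    and "{x \<in> E. poly (q_poly q n a) x = 0} =
           {\<Sum>i<n. c i * \<alpha> i | c. \<forall>i<n. c i ^ q = c i}"
  shows "det (mat n n (\<lambda>(i, j). \<alpha> i ^ (q ^ j))) \<noteq> 0 \<and>
         det (mat n n (\<lambda>(i, j). \<alpha> i ^ (q ^ j))) ^ (q - 1) \<in> F \<and>
         normal_extension F (gen_subfield F {det (mat n n (\<lambda>(i, j). \<alpha> i ^ (q ^ j)))})"
proof -
  have p: "prime CHAR('a)" and q: "q = CHAR('a) ^ k"
    using assms(1,2,4) by simp_all
  have "q > 1"
    using one_less_power[OF prime_gt_1_nat[OF assms(1)], of k] assms(3,4) by simp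
  note fixed = fixed_points_subset_subfield[OF \<open>q > 1\<close> assms(6)]
  have "finite {x::'a. x ^ q = x}"
    using fixed(2) \<open>q > 1\<close> by (intro card_ge_0_finite) simp
  then have card_unity: "card {\<zeta>::'a. \<zeta> ^ (q - 1) = 1} = q - 1"
    unfolding roots_of_unity_eq_fixed_points[OF \<open>q > 1\<close>]
    using fixed(2) \<open>q > 1\<close> by (simp add: card_Diff_singleton power_0_left)
  have unity_F: "{\<zeta>::'a. \<zeta> ^ (q - 1) = 1} \<subseteq> F"
    unfolding roots_of_unity_eq_fixed_points[OF \<open>q > 1\<close>] using fixed(1) by blast
  define \<delta> where "\<delta> = det (moore_mat q n \<alpha>)"
  have "\<delta> \<noteq> 0"
    unfolding \<delta>_def using moore_det_nonzero[OF p q \<open>q > 1\<close> fixed(2) assms(12)] .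
  moreover have "\<delta> ^ (q - 1) \<in> F"
    unfolding \<delta>_def using assms(8,11) \<open>\<delta> \<noteq> 0\<close>
    by (intro moore_det_power_in_subfield[OF p q assms(5), where a = a]) (simp_all add: \<delta>_def)
  moreover have "normal_extension F (gen_subfield F {\<delta>})"
    using \<open>q > 1\<close> card_unity unity_F \<open>\<delta> ^ (q - 1) \<in> F\<close>
    by (intro normal_extension_adjoin_radical[OF assms(5)]) simp_all
  ultimately show ?thesis
    by (simp add: \<delta>_def moore_mat_def)
qed

end
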